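(* Let $\Phi=(V,\mathcal C)$ be a $(k,d,s)$-CNF formula satisfying $k\ge\log d+\log k+\log(2\mathrm e)+s$, and let $c^*\notin\mathcal C$ be a clause on $k$ distinct variables with forbidden assignment $\sigma^*$. If there exists a clause $c'\in\mathcal C$ with $\mathrm{vbl}(c')=\mathrm{vbl}(c^* )$ but $c'\ne c^*$, then $$\Pr_{X\sim\mu_\Phi}[X_{\mathrm{vbl}(c^* )}=\sigma^*]\ge\Big(1-\frac12\exp\Big(\frac1k\Big)\Big)^k.$$
   Context: $\log$ denotes $\log_2$. A $(k,d,s)$-CNF formula is a CNF formula in which every clause contains exactly $k$ distinct variables, every variable appears in at most $d$ clauses, and any two distinct clauses share at most $s$ variables. $\mathrm{vbl}(c)$ is the variable set of clause $c$; the forbidden assignment of a clause is the unique assignment of its variables violating it. $\mu_\Phi$ is the uniform distribution over satisfying assignments of $\Phi$. *)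

theory Defs
  imports Complex_Main "HOL-Library.FuncSet"
begin

text \<open>A literal is a pair (x, b), satisfied by an assignment X iff X x = b.
  A clause is a finite set of literals on pairwise distinct variables.\<close>

type_synonym 'v clause = "('v \<times> bool) set"

definition is_clause :: "'v clause \<Rightarrow> bool" where
  "is_clause c \<longleftrightarrow> finite c \<and> inj_on fst c"

definition vbl :: "'v clause \<Rightarrow> 'v set" where
  "vbl c = fst ` c"

definition violates :: "('v \<Rightarrow> bool) \<Rightarrow> 'v clause \<Rightarrow> bool" where
  "violates X c \<longleftrightarrow> (\<forall>(x, b) \<in> c. X x = (\<not> b))"

definition kds_CNF :: "nat \<Rightarrow> nat \<Rightarrow> nat \<Rightarrow> 'v set \<Rightarrow> 'v clause set \<Rightarrow> bool" where
  "kds_CNF k d s V C \<longleftrightarrow>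
     finite V \<and>
     (\<forall>c\<in>C. is_clause c \<and> card (vbl c) = k \<and> vbl c \<subseteq> V) \<and>
     (\<forall>x\<in>V. card {c\<in>C. x \<in> vbl c} \<le> d) \<and>
     (\<forall>c\<in>C. \<forall>c'\<in>C. c \<noteq> c' \<longrightarrow> card (vbl c \<inter> vbl c') \<le> s)"

definition sat_assignments :: "'v set \<Rightarrow> 'v clause set \<Rightarrow> ('v \<Rightarrow> bool) set" where
  "sat_assignments V C = {X \<in> V \<rightarrow>\<^sub>E (UNIV :: bool set). \<forall>c\<in>C. \<not> violates X c}"

definition prob_forbidden :: "'v set \<Rightarrow> 'v clause set \<Rightarrow> 'v clause \<Rightarrow> real" where
  "prob_forbidden V C c =
     real (card {X \<in> sat_assignments V C. violates X c}) / real (card (sat_assignments V C))"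

end

theory Submission
  imports Defs
begin

text \<open>
  Pin the variables of cs, one at a time, to the forbidden assignment \<sigma>* of cs, starting with a
  variable v1 on which the forbidden assignments of c' and cs differ. Once v1 is pinned, c'
  cannot be violated, and every other clause shares at most s variables with cs, so each
  clause keeps at least k - s free variables and is violated with probability at most
  2^(s-k) \<le> 1/(4dk). The Lovasz Local Lemma with weight x = 1/(2dk) therefore applies in
  every space obtained along the way. Pinning one more variable v keeps a fraction at least
  1 - e^(1/k)/2 of the satisfying assignments: the event X v \<noteq> \<sigma>* v has probability 1/2,
  depends on at most d clauses, and conditioning on satisfiability inflates it by at most
  (1 - x)^(-d) \<le> e^(1/k). Multiplying over the k variables of cs gives the bound.
\<close>

section \<open>Uniform probability and a counting Lovasz Local Lemma\<close>

definition uprob :: "'a set \<Rightarrow> 'a set \<Rightarrow> real" where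
  "uprob \<Omega> E = real (card (\<Omega> \<inter> E)) / real (card \<Omega>)"

definition avoid :: "('i \<Rightarrow> 'a set) \<Rightarrow> 'i set \<Rightarrow> 'a set" where
  "avoid A J = {\<omega>. \<forall>j\<in>J. \<omega> \<notin> A j}"

lemma uprob_nonneg: "0 \<le> uprob \<Omega> E"
  by (simp add: uprob_def)

lemma uprob_mono: "finite \<Omega> \<Longrightarrow> E \<subseteq> E' \<Longrightarrow> uprob \<Omega> E \<le> uprob \<Omega> E'"
  unfolding uprob_def by (intro divide_right_mono) (auto intro: card_mono)

lemma uprob_split:
  assumes "finite \<Omega>"
  shows "uprob \<Omega> E = uprob \<Omega> (E \<inter> D) + uprob \<Omega> (E - D)"
proof -
  have "card (\<Omega> \<inter> E) = card (\<Omega> \<inter> (E \<inter> D)) + card (\<Omega> \<inter> (E - D))"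
    using assms by (subst card_Un_disjoint[symmetric]) (auto intro: arg_cong[where f = card])
  then show ?thesis
    unfolding uprob_def by (simp add: add_divide_distrib)
qed

lemma avoid_insert: "avoid A (insert j J) = avoid A J - A j"
  by (auto simp: avoid_def)

lemma avoid_antimono: "J \<subseteq> J' \<Longrightarrow> avoid A J' \<subseteq> avoid A J"
  by (auto simp: avoid_def)

lemma uprob_avoid_insert_ge:
  assumes "finite \<Omega>" and "uprob \<Omega> (A j \<inter> avoid A M) \<le> x * uprob \<Omega> (avoid A M)"
  shows "(1 - x) * uprob \<Omega> (avoid A M) \<le> uprob \<Omega> (avoid A (insert j M))"
proof -
  have "uprob \<Omega> (avoid A M) = uprob \<Omega> (A j \<inter> avoid A M) + uprob \<Omega> (avoid A (insert j M))"
    using uprob_split[OF assms(1), of "avoid A M" "A j"] by (simp add: avoid_insert Int_commute)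
  then show ?thesis
    using assms(2) by (simp add: algebra_simps)
qed

lemma uprob_avoid_union_ge:
  assumes "finite \<Omega>" and "x \<le> 1" and "finite J1"
    and "J0 \<subseteq> J" "J1 \<subseteq> J" "J0 \<inter> J1 = {}"
    and cond: "\<And>M j. M \<subset> J \<Longrightarrow> j \<in> J - M \<Longrightarrow>
      uprob \<Omega> (A j \<inter> avoid A M) \<le> x * uprob \<Omega> (avoid A M)"
  shows "uprob \<Omega> (avoid A J0) * (1 - x) ^ card J1 \<le> uprob \<Omega> (avoid A (J0 \<union> J1))"
  using \<open>finite J1\<close> \<open>J1 \<subseteq> J\<close> \<open>J0 \<inter> J1 = {}\<close>
proof (induction J1 rule: finite_induct)
  case empty
  then show ?case by simp
next
  case (insert j F)
  have "uprob \<Omega> (avoid A J0) * (1 - x) ^ card (insert j F)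
      = (1 - x) * (uprob \<Omega> (avoid A J0) * (1 - x) ^ card F)"
    using insert.hyps by simp
  also have "\<dots> \<le> (1 - x) * uprob \<Omega> (avoid A (J0 \<union> F))"
    using insert \<open>x \<le> 1\<close> by (intro mult_left_mono) auto
  also have "\<dots> \<le> uprob \<Omega> (avoid A (insert j (J0 \<union> F)))"
    using insert \<open>J0 \<subseteq> J\<close> by (intro uprob_avoid_insert_ge[OF \<open>finite \<Omega>\<close>] cond) auto
  finally show ?case
    by simp
qed

text \<open>Only the factorisation of each event against the avoidance of its non-neighbours is
  assumed; this is weaker than mutual independence.\<close>

locale counting_lll =
  fixes \<Omega> :: "'a set" and I :: "'i set" and A :: "'i \<Rightarrow> 'a set" and \<Gamma> :: "'i \<Rightarrow> 'i set"
    and x :: real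
  assumes finite_space: "finite \<Omega>" and finite_events: "finite I"
    and x_nonneg: "0 \<le> x" and x_le_1: "x \<le> 1"
    and neighbours_subset: "i \<in> I \<Longrightarrow> \<Gamma> i \<subseteq> I"
    and factorise: "i \<in> I \<Longrightarrow> J \<subseteq> I - \<Gamma> i - {i} \<Longrightarrow>
      uprob \<Omega> (A i \<inter> avoid A J) = uprob \<Omega> (A i) * uprob \<Omega> (avoid A J)"
    and event_bound: "i \<in> I \<Longrightarrow> uprob \<Omega> (A i) \<le> x * (1 - x) ^ card (\<Gamma> i)"
begin

lemma uprob_event_avoid_le:
  "J \<subseteq> I \<Longrightarrow> i \<in> I - J \<Longrightarrow> uprob \<Omega> (A i \<inter> avoid A J) \<le> x * uprob \<Omega> (avoid A J)"
proof (induction "card J" arbitrary: J i rule: less_induct)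
  case less
  have "finite J"
    using less.prems finite_events finite_subset by blast
  have i: "i \<in> I" "i \<notin> J"
    using less.prems by auto
  have "finite (\<Gamma> i)"
    using neighbours_subset[OF i(1)] finite_events finite_subset by blast
  define J1 where "J1 = J \<inter> \<Gamma> i"
  define J2 where "J2 = J - \<Gamma> i"
  have IH: "uprob \<Omega> (A j \<inter> avoid A M) \<le> x * uprob \<Omega> (avoid A M)" if "M \<subset> J" "j \<in> J - M" for M j
    using less.hyps[of M j] psubset_card_mono[OF \<open>finite J\<close> that(1)] that less.prems by blast
  have "uprob \<Omega> (A i \<inter> avoid A J) \<le> uprob \<Omega> (A i \<inter> avoid A J2)"
    using avoid_antimono[of J2 J A] unfolding J2_def by (intro uprob_mono finite_space) auto
  also have "\<dots> = uprob \<Omega> (A i) * uprob \<Omega> (avoid A J2)"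
    using factorise[OF i(1), of J2] less.prems unfolding J2_def by auto
  also have "\<dots> \<le> x * (1 - x) ^ card (\<Gamma> i) * uprob \<Omega> (avoid A J2)"
    using event_bound[OF i(1)] by (intro mult_right_mono uprob_nonneg)
  also have "\<dots> \<le> x * ((1 - x) ^ card J1 * uprob \<Omega> (avoid A J2))"
  proof -
    have "card J1 \<le> card (\<Gamma> i)"
      unfolding J1_def using \<open>finite (\<Gamma> i)\<close> by (intro card_mono) auto
    then have "(1 - x) ^ card (\<Gamma> i) \<le> (1 - x) ^ card J1"
      using x_nonneg x_le_1 by (intro power_decreasing) auto
    then show ?thesis
      using x_nonneg by (simp add: mult.assoc mult_left_mono mult_right_mono uprob_nonneg)
  qed
  also have "\<dots> \<le> x * uprob \<Omega> (avoid A (J2 \<union> J1))"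
    using uprob_avoid_union_ge[OF finite_space x_le_1 _ _ _ _ IH, of J1 J2] \<open>finite J\<close>
      x_nonneg
    by (intro mult_left_mono) (auto simp: J1_def J2_def mult.commute)
  also have "J2 \<union> J1 = J"
    unfolding J1_def J2_def by auto
  finally show ?case .
qed

lemma uprob_avoid_all_ge:
  assumes "\<Omega> \<noteq> {}"
  shows "(1 - x) ^ card I \<le> uprob \<Omega> (avoid A I)"
proof -
  have "uprob \<Omega> (avoid A {}) * (1 - x) ^ card I \<le> uprob \<Omega> (avoid A ({} \<union> I))"
    using uprob_event_avoid_le
    by (intro uprob_avoid_union_ge[OF finite_space x_le_1 finite_events]) auto
  moreover have "uprob \<Omega> (avoid A {}) = 1"
    using assms finite_space by (simp add: uprob_def avoid_def)
  ultimately show ?thesis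
    by simp
qed

lemma uprob_Int_avoid_all_le:
  assumes "G \<subseteq> I"
    and factorise_B: "\<And>J. J \<subseteq> I - G \<Longrightarrow> uprob \<Omega> (B \<inter> avoid A J) = uprob \<Omega> B * uprob \<Omega> (avoid A J)"
  shows "uprob \<Omega> (B \<inter> avoid A I) * (1 - x) ^ card G \<le> uprob \<Omega> B * uprob \<Omega> (avoid A I)"
proof -
  have "uprob \<Omega> (B \<inter> avoid A I) * (1 - x) ^ card G
      \<le> uprob \<Omega> (B \<inter> avoid A (I - G)) * (1 - x) ^ card G"
    using avoid_antimono[of "I - G" I A] x_le_1
    by (intro mult_right_mono uprob_mono finite_space) auto
  also have "\<dots> = uprob \<Omega> B * (uprob \<Omega> (avoid A (I - G)) * (1 - x) ^ card G)"
    by (simp add: factorise_B)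
  also have "\<dots> \<le> uprob \<Omega> B * uprob \<Omega> (avoid A ((I - G) \<union> G))"
    using uprob_event_avoid_le assms(1) finite_events finite_subset
    by (intro mult_left_mono uprob_nonneg
        uprob_avoid_union_ge[OF finite_space x_le_1, where J = I]) auto
  also have "(I - G) \<union> G = I"
    using assms(1) by auto
  finally show ?thesis .
qed

end

section \<open>Assignments with pinned variables\<close>

lemma uprob_Int_eq_mult_if_override_closed:
  fixes \<Omega> :: "('v \<Rightarrow> 'b) set"
  assumes "finite \<Omega>"
    and closed: "\<And>X Y. X \<in> \<Omega> \<Longrightarrow> Y \<in> \<Omega> \<Longrightarrow> override_on Y X T \<in> \<Omega>"
    and B_on_T: "\<And>X Y. (\<forall>v\<in>T. X v = Y v) \<Longrightarrow> X \<in> B \<longleftrightarrow> Y \<in> B"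
    and E_off_T: "\<And>X Y. (\<forall>v. v \<notin> T \<longrightarrow> X v = Y v) \<Longrightarrow> X \<in> E \<longleftrightarrow> Y \<in> E"
  shows "uprob \<Omega> (B \<inter> E) = uprob \<Omega> B * uprob \<Omega> E"
proof -
  define swap :: "('v \<Rightarrow> 'b) \<times> ('v \<Rightarrow> 'b) \<Rightarrow> ('v \<Rightarrow> 'b) \<times> ('v \<Rightarrow> 'b)"
    where "swap = (\<lambda>(X, Y). (override_on Y X T, override_on X Y T))"
  have override_back: "override_on (override_on X Y T) (override_on Y X T) T = X" for X Y
    by (simp add: override_on_def fun_eq_iff)
  have B_iff: "override_on Y X T \<in> B \<longleftrightarrow> X \<in> B" for X Y
    by (rule B_on_T) (simp add: override_on_def)
  have E_iff: "override_on Y X T \<in> E \<longleftrightarrow> Y \<in> E" for X Y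
    by (rule E_off_T) (simp add: override_on_def)
  have "bij_betw swap ((\<Omega> \<inter> B) \<times> (\<Omega> \<inter> E)) ((\<Omega> \<inter> (B \<inter> E)) \<times> \<Omega>)"
    by (rule bij_betw_byWitness[where f' = swap])
      (auto simp: swap_def override_back B_iff E_iff closed)
  then have "card (\<Omega> \<inter> B) * card (\<Omega> \<inter> E) = card (\<Omega> \<inter> (B \<inter> E)) * card \<Omega>"
    by (metis bij_betw_same_card card_cartesian_product)
  then have "real (card (\<Omega> \<inter> B)) * real (card (\<Omega> \<inter> E)) = real (card (\<Omega> \<inter> (B \<inter> E))) * real (card \<Omega>)"
    by (metis of_nat_mult)
  then show ?thesis
    by (cases "card \<Omega> = 0") (auto simp: uprob_def field_simps)
qed

definition pinned :: "'v set \<Rightarrow> 'v set \<Rightarrow> ('v \<Rightarrow> bool) \<Rightarrow> ('v \<Rightarrow> bool) set" where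
  "pinned V F \<sigma> = (\<Pi>\<^sub>E v\<in>V. if v \<in> F then {\<sigma> v} else UNIV)"

lemma pinned_empty: "pinned V {} \<sigma> = V \<rightarrow>\<^sub>E UNIV"
  by (simp add: pinned_def)

lemma mem_pinned_iff:
  "F \<subseteq> V \<Longrightarrow> X \<in> pinned V F \<sigma> \<longleftrightarrow> X \<in> V \<rightarrow>\<^sub>E UNIV \<and> (\<forall>u\<in>F. X u = \<sigma> u)"
  by (auto simp: pinned_def PiE_iff)

lemma finite_pinned: "finite V \<Longrightarrow> finite (pinned V F \<sigma>)"
  unfolding pinned_def by (intro finite_PiE) auto

lemma card_pinned: "finite V \<Longrightarrow> card (pinned V F \<sigma>) = 2 ^ card (V - F)"
  unfolding pinned_def by (simp add: card_PiE if_distrib[of card] prod.If_cases Diff_eq)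

lemma pinned_insert: "v \<in> V \<Longrightarrow> pinned V (insert v F) \<sigma> = pinned V F \<sigma> \<inter> {X. X v = \<sigma> v}"
  unfolding pinned_def PiE_iff by (fastforce split: if_splits)

lemma pinned_override_closed:
  "X \<in> pinned V F \<sigma> \<Longrightarrow> Y \<in> pinned V F \<sigma> \<Longrightarrow> override_on Y X T \<in> pinned V F \<sigma>"
  by (auto simp: pinned_def PiE_iff override_on_def extensional_def)

lemma uprob_pinned_agree:
  assumes "finite V" and "U \<subseteq> V - F"
  shows "uprob (pinned V F \<sigma>) {X. \<forall>u\<in>U. X u = g u} = 1 / 2 ^ card U"
proof -
  have "pinned V F \<sigma> \<inter> {X. \<forall>u\<in>U. X u = g u} = pinned V (F \<union> U) (\<lambda>u. if u \<in> F then \<sigma> u else g u)"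
    using assms(2) unfolding pinned_def PiE_iff by (fastforce split: if_splits)
  moreover have "card (V - F) = card (V - (F \<union> U)) + card U"
  proof -
    have "V - (F \<union> U) = (V - F) - U"
      by auto
    moreover have "finite U" "card U \<le> card (V - F)"
      using assms finite_subset by (auto intro: card_mono)
    ultimately show ?thesis
      using assms(2) by (simp add: card_Diff_subset)
  qed
  ultimately show ?thesis
    using assms(1) by (simp add: uprob_def card_pinned power_add)
qed

definition forbidden :: "'v clause \<Rightarrow> 'v \<Rightarrow> bool" where
  "forbidden c u \<longleftrightarrow> (u, False) \<in> c"

definition violated :: "'v clause \<Rightarrow> ('v \<Rightarrow> bool) set" where
  "violated c = {X. violates X c}"

lemma forbidden_eq: "is_clause c \<Longrightarrow> (u, b) \<in> c \<Longrightarrow> forbidden c u = (\<not> b)"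
  unfolding forbidden_def is_clause_def
  by (cases b) (auto dest: inj_onD[where x = "(u, True)" and y = "(u, False)"])

lemma finite_vbl: "is_clause c \<Longrightarrow> finite (vbl c)"
  by (simp add: is_clause_def vbl_def)

lemma card_vbl_pos: "is_clause c \<Longrightarrow> u \<in> vbl c \<Longrightarrow> 0 < card (vbl c)"
  using finite_vbl by (auto simp: card_gt_0_iff)

lemma violates_iff_forbidden:
  "is_clause c \<Longrightarrow> violates X c \<longleftrightarrow> (\<forall>u\<in>vbl c. X u = forbidden c u)"
  unfolding violates_def vbl_def using forbidden_eq[of c] by fastforce

lemma violates_cong: "\<forall>u\<in>vbl c. X u = Y u \<Longrightarrow> violates X c \<longleftrightarrow> violates Y c"
  unfolding violates_def vbl_def by force

lemma clause_eq_image_forbidden: "is_clause c \<Longrightarrow> c = (\<lambda>u. (u, \<not> forbidden c u)) ` vbl c"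
  unfolding vbl_def using forbidden_eq[of c] by force

lemma ex_forbidden_neq:
  assumes "is_clause c" "is_clause c'" "vbl c = vbl c'" "c \<noteq> c'"
  shows "\<exists>u\<in>vbl c. forbidden c u \<noteq> forbidden c' u"
proof (rule ccontr)
  assume "\<not> ?thesis"
  then have "(\<lambda>u. (u, \<not> forbidden c u)) ` vbl c = (\<lambda>u. (u, \<not> forbidden c' u)) ` vbl c'"
    using assms(3) by (auto intro: image_cong)
  then show False
    using assms clause_eq_image_forbidden by metis
qed

lemma uprob_pinned_Int_avoid_violated:
  assumes "finite V"
    and B_on_T: "\<And>X Y. \<forall>v\<in>T. X v = Y v \<Longrightarrow> X \<in> B \<longleftrightarrow> Y \<in> B"
    and J_off_T: "\<And>c. c \<in> J \<Longrightarrow> vbl c \<inter> T = {}"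
  shows "uprob (pinned V F \<sigma>) (B \<inter> avoid violated J)
    = uprob (pinned V F \<sigma>) B * uprob (pinned V F \<sigma>) (avoid violated J)"
proof (rule uprob_Int_eq_mult_if_override_closed[OF finite_pinned[OF assms(1)]
      pinned_override_closed B_on_T])
  fix X Y :: "'a \<Rightarrow> bool"
  assume "\<forall>v. v \<notin> T \<longrightarrow> X v = Y v"
  then have "violates X c \<longleftrightarrow> violates Y c" if "c \<in> J" for c
    using J_off_T[OF that] by (intro violates_cong) auto
  then show "X \<in> avoid violated J \<longleftrightarrow> Y \<in> avoid violated J"
    by (auto simp: avoid_def violated_def)
qed

lemma kds_CNF_finite_clauses:
  assumes "kds_CNF k d s V C"
  shows "finite C"
proof -
  have "C \<subseteq> Pow (V \<times> UNIV)"
    using assms unfolding kds_CNF_def vbl_def by fastforce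
  then show ?thesis
    using assms unfolding kds_CNF_def by (auto intro: finite_subset)
qed

lemma kds_CNF_degree_pos:
  assumes "kds_CNF k d s V C" "c \<in> C" "u \<in> vbl c"
  shows "1 \<le> d"
proof -
  have "c \<in> {c \<in> C. u \<in> vbl c}" "finite {c \<in> C. u \<in> vbl c}"
    using assms kds_CNF_finite_clauses[OF assms(1)] by auto
  then have "1 \<le> card {c \<in> C. u \<in> vbl c}"
    by (metis One_nat_def Suc_leI card_gt_0_iff empty_iff)
  also have "\<dots> \<le> d"
    using assms unfolding kds_CNF_def by blast
  finally show ?thesis .
qed

lemma exp_le_one_minus_power:
  fixes y :: real
  assumes "0 \<le> y" "y \<le> 1/2"
  shows "exp (- 2 * real n * y) \<le> (1 - y) ^ n"
proof -
  have "y * (2 * y) \<le> y * 1"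
    using assms by (intro mult_left_mono) auto
  then have "- 2 * y \<le> - y - 2 * y\<^sup>2"
    by (simp add: power2_eq_square algebra_simps)
  also have "\<dots> \<le> ln (1 - y)"
    by (rule ln_one_minus_pos_lower_bound[OF assms])
  finally have "exp (- 2 * y) \<le> 1 - y"
    using assms by (simp add: ln_ge_iff)
  then have "exp (- 2 * y) ^ n \<le> (1 - y) ^ n"
    by (intro power_mono) auto
  then show ?thesis
    by (simp add: exp_of_nat_mult[symmetric] algebra_simps)
qed

lemma four_mult_le_two_power_if_log_bound:
  fixes d k s :: nat
  assumes "1 \<le> d" "1 \<le> k"
    and "log 2 d + log 2 k + log 2 (2 * exp 1) + s \<le> k"
  shows "4 * d * k \<le> 2 ^ (k - s)"
proof -
  have "1 < log 2 (2 * exp 1)"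
    using exp_ge_add_one_self[of 1] by (subst less_log_iff) auto
  moreover have "0 \<le> log 2 d" "0 \<le> log 2 k"
    using assms by auto
  ultimately have "s \<le> k"
    using assms(3) by linarith
  have "log 2 (2 * exp 1 * d * k) \<le> real (k - s)"
    using assms \<open>s \<le> k\<close> by (simp add: log_mult)
  then have "2 * exp 1 * d * k \<le> (2::real) ^ (k - s)"
    using assms by (simp add: log_le_iff powr_realpow)
  moreover have "(4::real) * d * k \<le> 2 * exp 1 * d * k"
    using exp_ge_add_one_self[of 1] by (intro mult_right_mono) auto
  ultimately have "(4::real) * d * k \<le> 2 ^ (k - s)"
    by linarith
  then have "real (4 * d * k) \<le> real (2 ^ (k - s))"
    by simp
  then show ?thesis
    by (simp only: of_nat_le_iff)
qed

section \<open>Pinning the variables of a twin clause\<close>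

locale twin_clause =
  fixes k d s :: nat and V :: "'v set" and C :: "'v clause set" and cs c' :: "'v clause"
    and v1 :: 'v
  assumes kds: "kds_CNF k d s V C"
    and cs_clause: "is_clause cs" and card_vbl_cs: "card (vbl cs) = k"
    and twin: "c' \<in> C" "vbl c' = vbl cs"
    and v1: "v1 \<in> vbl cs" "forbidden c' v1 \<noteq> forbidden cs v1"
    and density: "4 * d * k \<le> 2 ^ (k - s)"
begin

definition \<sigma> :: "'v \<Rightarrow> bool" where
  "\<sigma> = forbidden cs"

definition x :: real where
  "x = 1 / (2 * d * k)"

definition neighbours :: "'v clause \<Rightarrow> 'v clause set" where
  "neighbours c = {c'' \<in> C. c'' \<noteq> c \<and> vbl c'' \<inter> vbl c \<noteq> {}}"

text \<open>Pinning v1 first makes c' unviolable; every other clause shares at most s variables with cs.\<close>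

definition admissible :: "'v set \<Rightarrow> bool" where
  "admissible F \<longleftrightarrow> F \<subseteq> vbl cs \<and> (F = {} \<or> v1 \<in> F)"

definition sat_pinned :: "'v set \<Rightarrow> ('v \<Rightarrow> bool) set" where
  "sat_pinned F = pinned V F \<sigma> \<inter> avoid violated C"

lemma finite_V: "finite V"
  using kds by (simp add: kds_CNF_def)

lemma finite_C: "finite C"
  by (rule kds_CNF_finite_clauses[OF kds])

lemma clause_in_C:
  assumes "c \<in> C"
  shows "is_clause c" "card (vbl c) = k" "vbl c \<subseteq> V"
  using assms kds by (auto simp: kds_CNF_def)

lemma vbl_cs_subset: "vbl cs \<subseteq> V"
  using clause_in_C(3)[OF twin(1)] twin(2) by simp

lemma d_pos: "1 \<le> d"
  using kds_CNF_degree_pos[OF kds twin(1)] v1(1) twin(2) by simp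

lemma k_ge_2: "2 \<le> k"
proof -
  have "1 \<le> k"
    using card_vbl_pos[OF cs_clause v1(1)] card_vbl_cs by simp
  then have "(2::nat) ^ 2 \<le> 4 * d * k"
    using d_pos by (simp add: mult_le_mono)
  also have "\<dots> \<le> 2 ^ (k - s)"
    by (rule density)
  also have "\<dots> \<le> 2 ^ k"
    by (rule power_increasing) auto
  finally have "(2::nat) ^ 2 \<le> 2 ^ k" .
  then show ?thesis
    by (simp only: power_increasing_iff[of "2::nat"])
qed

lemma x_nonneg: "0 \<le> x"
  by (simp add: x_def)

lemma x_le_half: "x \<le> 1/2"
proof -
  have "1 * 1 \<le> real d * real k"
    using d_pos k_ge_2 by (intro mult_mono) auto
  then show ?thesis
    by (simp add: x_def field_simps)
qed

lemma card_neighbours_le: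
  assumes "c \<in> C"
  shows "card (neighbours c) \<le> k * d"
proof -
  have "card (neighbours c) \<le> card (\<Union>u\<in>vbl c. {c'' \<in> C. u \<in> vbl c''})"
    by (intro card_mono) (auto simp: neighbours_def intro: finite_subset[OF _ finite_C])
  also have "\<dots> \<le> (\<Sum>u\<in>vbl c. card {c'' \<in> C. u \<in> vbl c''})"
    using finite_vbl[OF clause_in_C(1)[OF assms]] by (rule card_UN_le)
  also have "\<dots> \<le> (\<Sum>u\<in>vbl c. d)"
    using clause_in_C(3)[OF assms] kds by (intro sum_mono) (auto simp: kds_CNF_def)
  also have "\<dots> = k * d"
    using clause_in_C(2)[OF assms] by simp
  finally show ?thesis .
qed

lemma weight_bound:
  assumes "c \<in> C"
  shows "1 / (4 * d * k) \<le> x * (1 - x) ^ card (neighbours c)"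
proof -
  have "1 / 2 = 1 + real (k * d) * (- x)"
    using d_pos k_ge_2 by (simp add: x_def field_simps)
  also have "\<dots> \<le> (1 - x) ^ (k * d)"
    using Bernoulli_inequality[of "- x" "k * d"] x_le_half by simp
  also have "\<dots> \<le> (1 - x) ^ card (neighbours c)"
    using x_nonneg x_le_half card_neighbours_le[OF assms] by (intro power_decreasing) auto
  finally have "x * (1 / 2) \<le> x * (1 - x) ^ card (neighbours c)"
    using x_nonneg by (intro mult_left_mono)
  then show ?thesis
    by (simp add: x_def)
qed

lemma card_vbl_Int_le:
  assumes "admissible F" "c \<in> C" "c = c' \<Longrightarrow> v1 \<notin> F"
  shows "card (vbl c \<inter> F) \<le> s"
proof (cases "c = c'")
  case True
  then show ?thesis
    using assms by (auto simp: admissible_def)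
next
  case False
  have "card (vbl c \<inter> F) \<le> card (vbl c \<inter> vbl c')"
    using assms(1) twin(2) finite_vbl[OF clause_in_C(1)[OF assms(2)]]
    by (intro card_mono) (auto simp: admissible_def)
  also have "\<dots> \<le> s"
    using kds assms(2) twin(1) False by (auto simp: kds_CNF_def)
  finally show ?thesis .
qed

lemma uprob_violated_le:
  assumes "admissible F" "c \<in> C"
  shows "uprob (pinned V F \<sigma>) (violated c) \<le> x * (1 - x) ^ card (neighbours c)"
proof (cases "c = c' \<and> v1 \<in> F")
  case True
  have "F \<subseteq> V"
    using assms(1) vbl_cs_subset by (auto simp: admissible_def)
  then have "pinned V F \<sigma> \<inter> violated c = {}"
    using True v1 twin clause_in_C(1)
    by (auto simp: mem_pinned_iff violated_def violates_iff_forbidden \<sigma>_def)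
  then show ?thesis
    using x_nonneg x_le_half by (simp add: uprob_def)
next
  case False
  define U where "U = vbl c - F"
  have "finite (vbl c)"
    using finite_vbl[OF clause_in_C(1)[OF assms(2)]] .
  have "k - s \<le> card U"
    using card_vbl_Int_le[OF assms] False clause_in_C(2)[OF assms(2)] \<open>finite (vbl c)\<close>
    by (simp add: U_def card_Diff_subset_Int)
  have "uprob (pinned V F \<sigma>) (violated c)
      \<le> uprob (pinned V F \<sigma>) {X. \<forall>u\<in>U. X u = forbidden c u}"
    using clause_in_C(1)[OF assms(2)] finite_pinned[OF finite_V]
    by (intro uprob_mono) (auto simp: U_def violated_def violates_iff_forbidden)
  also have "\<dots> = 1 / 2 ^ card U"
    using clause_in_C(3)[OF assms(2)] by (intro uprob_pinned_agree finite_V) (auto simp: U_def)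
  also have "\<dots> \<le> 1 / 2 ^ (k - s)"
    using \<open>k - s \<le> card U\<close> by (intro divide_left_mono power_increasing) auto
  also have "\<dots> \<le> 1 / (4 * d * k)"
  proof -
    have "real (4 * d * k) \<le> real (2 ^ (k - s))"
      using density by (simp only: of_nat_le_iff)
    then show ?thesis
      using d_pos k_ge_2 by (intro divide_left_mono) auto
  qed
  also have "\<dots> \<le> x * (1 - x) ^ card (neighbours c)"
    by (rule weight_bound[OF assms(2)])
  finally show ?thesis .
qed

lemma counting_lll_pinned:
  assumes "admissible F"
  shows "counting_lll (pinned V F \<sigma>) C violated neighbours x"
proof unfold_locales
  show "finite (pinned V F \<sigma>)"
    by (rule finite_pinned[OF finite_V])
  show "finite C"
    by (rule finite_C)
  show "0 \<le> x" "x \<le> 1"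
    using x_nonneg x_le_half by auto
  show "neighbours c \<subseteq> C" for c
    by (auto simp: neighbours_def)
  show "uprob (pinned V F \<sigma>) (violated c \<inter> avoid violated J)
      = uprob (pinned V F \<sigma>) (violated c) * uprob (pinned V F \<sigma>) (avoid violated J)"
    if "J \<subseteq> C - neighbours c - {c}" for c J
    using that violates_cong[of c]
    by (intro uprob_pinned_Int_avoid_violated[OF finite_V, where T = "vbl c"])
      (auto simp: violated_def neighbours_def)
  show "uprob (pinned V F \<sigma>) (violated c) \<le> x * (1 - x) ^ card (neighbours c)" if "c \<in> C" for c
    by (rule uprob_violated_le[OF assms that])
qed

lemma card_sat_pinned_empty_pos: "0 < card (sat_pinned {})"
proof -
  interpret counting_lll "pinned V {} \<sigma>" C violated neighbours x
    by (rule counting_lll_pinned) (simp add: admissible_def)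
  have "pinned V {} \<sigma> \<noteq> {}"
    using card_pinned[OF finite_V, of "{}" \<sigma>] by auto
  have "0 < (1 - x) ^ card C"
    using x_le_half by simp
  also have "\<dots> \<le> uprob (pinned V {} \<sigma>) (avoid violated C)"
    by (rule uprob_avoid_all_ge) fact
  finally show ?thesis
    by (simp add: uprob_def sat_pinned_def zero_less_divide_iff)
qed

lemma uprob_unpinned_avoid_le:
  assumes "admissible F" "v \<in> vbl cs - F"
  shows "uprob (pinned V F \<sigma>) ({X. X v \<noteq> \<sigma> v} \<inter> avoid violated C)
    \<le> exp (1 / k) / 2 * uprob (pinned V F \<sigma>) (avoid violated C)"
proof -
  let ?\<Omega> = "pinned V F \<sigma>" and ?B = "{X. X v \<noteq> \<sigma> v}" and ?N = "avoid violated C"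
  define G where "G = {c \<in> C. v \<in> vbl c}"
  interpret counting_lll ?\<Omega> C violated neighbours x
    by (rule counting_lll_pinned[OF assms(1)])
  have v: "v \<in> V" "v \<notin> F"
    using assms vbl_cs_subset by auto
  have half: "uprob ?\<Omega> ?B = 1 / 2"
    using uprob_pinned_agree[OF finite_V, of "{v}" F \<sigma> "\<lambda>_. \<not> \<sigma> v"] v by simp
  have decay: "exp (- 1 / k) \<le> (1 - x) ^ card G"
  proof -
    have "exp (- 1 / k) = exp (- 2 * real d * x)"
      using d_pos k_ge_2 by (simp add: x_def)
    also have "\<dots> \<le> (1 - x) ^ d"
      using x_nonneg x_le_half by (rule exp_le_one_minus_power)
    also have "\<dots> \<le> (1 - x) ^ card G"
      using kds v(1) x_nonneg x_le_half by (intro power_decreasing) (auto simp: G_def kds_CNF_def)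
    finally show ?thesis .
  qed
  have "uprob ?\<Omega> (?B \<inter> ?N) * exp (- 1 / k) \<le> uprob ?\<Omega> (?B \<inter> ?N) * (1 - x) ^ card G"
    using decay by (intro mult_left_mono uprob_nonneg)
  also have "\<dots> \<le> uprob ?\<Omega> ?B * uprob ?\<Omega> ?N"
    by (rule uprob_Int_avoid_all_le)
      (auto simp: G_def intro!: uprob_pinned_Int_avoid_violated[OF finite_V, where T = "{v}"])
  also have "\<dots> = uprob ?\<Omega> ?N / 2"
    by (simp only: half)
  finally show ?thesis
    by (simp add: exp_minus divide_simps mult.commute)
qed

lemma card_sat_pinned_insert_ge:
  assumes "admissible F" "v \<in> vbl cs - F"
  shows "(1 - exp (1 / k) / 2) * card (sat_pinned F) \<le> card (sat_pinned (insert v F))"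
proof -
  let ?\<Omega> = "pinned V F \<sigma>" and ?B = "{X. X v \<noteq> \<sigma> v}" and ?N = "avoid violated C"
  have "uprob ?\<Omega> ?N = uprob ?\<Omega> (?N \<inter> ?B) + uprob ?\<Omega> (?N - ?B)"
    by (rule uprob_split[OF finite_pinned[OF finite_V]])
  then have "(1 - exp (1 / k) / 2) * uprob ?\<Omega> ?N \<le> uprob ?\<Omega> (?N - ?B)"
    using uprob_unpinned_avoid_le[OF assms] by (simp add: Int_commute algebra_simps)
  then have "(1 - exp (1 / k) / 2) * card (?\<Omega> \<inter> ?N) / card ?\<Omega> \<le> card (?\<Omega> \<inter> (?N - ?B)) / card ?\<Omega>"
    by (simp add: uprob_def)
  moreover have "0 < real (card ?\<Omega>)"
    by (simp add: card_pinned[OF finite_V])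
  ultimately have "(1 - exp (1 / k) / 2) * card (?\<Omega> \<inter> ?N) \<le> card (?\<Omega> \<inter> (?N - ?B))"
    by (simp only: divide_le_cancel)
  moreover have "?\<Omega> \<inter> (?N - ?B) = sat_pinned (insert v F)"
    using assms vbl_cs_subset by (auto simp: sat_pinned_def pinned_insert)
  ultimately show ?thesis
    by (simp add: sat_pinned_def)
qed

lemma exp_one_div_k_le_2: "exp (1 / k) \<le> 2"
proof -
  have "exp (1 / k) \<le> exp (1 / 2)"
    using k_ge_2 by (simp add: field_simps)
  then show ?thesis
    using exp_half_le2 by linarith
qed

lemma card_sat_pinned_union_ge:
  assumes "v1 \<in> F" "F \<subseteq> vbl cs" and "finite G" "G \<subseteq> vbl cs - F"
  shows "(1 - exp (1 / k) / 2) ^ card G * card (sat_pinned F) \<le> card (sat_pinned (F \<union> G))"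
  using assms(3,4)
proof (induction G rule: finite_induct)
  case empty
  then show ?case
    by simp
next
  case (insert v G)
  let ?q = "1 - exp (1 / k) / 2"
  have "?q ^ card (insert v G) * card (sat_pinned F) = ?q * (?q ^ card G * card (sat_pinned F))"
    using insert.hyps by simp
  also have "\<dots> \<le> ?q * card (sat_pinned (F \<union> G))"
    using insert exp_one_div_k_le_2 by (intro mult_left_mono) auto
  also have "\<dots> \<le> card (sat_pinned (insert v (F \<union> G)))"
    using insert assms(1,2) by (intro card_sat_pinned_insert_ge) (auto simp: admissible_def)
  finally show ?case
    by simp
qed

lemma prob_forbidden_ge: "(1 - exp (1 / k) / 2) ^ k \<le> prob_forbidden V C cs"
proof -
  let ?q = "1 - exp (1 / k) / 2" and ?G = "vbl cs - {v1}"
  have "sat_assignments V C = sat_pinned {}"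
    by (auto simp: sat_assignments_def sat_pinned_def pinned_empty avoid_def violated_def)
  moreover have "{X \<in> sat_assignments V C. violates X cs} = sat_pinned (vbl cs)"
    using vbl_cs_subset cs_clause
    by (auto simp: sat_assignments_def sat_pinned_def mem_pinned_iff avoid_def violated_def
        violates_iff_forbidden \<sigma>_def)
  moreover have "?q ^ k * card (sat_pinned {}) \<le> card (sat_pinned (vbl cs))"
  proof -
    have "k = Suc (card ?G)"
      using v1(1) card_vbl_cs finite_vbl[OF cs_clause] by (metis card_Suc_Diff1)
    then have "?q ^ k * card (sat_pinned {}) = ?q ^ card ?G * (?q * card (sat_pinned {}))"
      by simp
    also have "\<dots> \<le> ?q ^ card ?G * card (sat_pinned {v1})"
      using v1(1) exp_one_div_k_le_2
      by (intro mult_left_mono card_sat_pinned_insert_ge) (auto simp: admissible_def)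
    also have "\<dots> \<le> card (sat_pinned ({v1} \<union> ?G))"
      using v1(1) finite_vbl[OF cs_clause] by (intro card_sat_pinned_union_ge) auto
    also have "{v1} \<union> ?G = vbl cs"
      using v1(1) by auto
    finally show ?thesis .
  qed
  ultimately show ?thesis
    using card_sat_pinned_empty_pos by (simp add: prob_forbidden_def pos_le_divide_eq)
qed

end

theorem lemma3p5:
  fixes k d s :: nat and V :: "'v set" and C :: "'v clause set" and cs c' :: "'v clause"
  assumes "kds_CNF k d s V C"
    and "real k \<ge> log 2 (real d) + log 2 (real k) + log 2 (2 * exp 1) + real s"
    and "is_clause cs" and "card (vbl cs) = k" and "cs \<notin> C"
    and "c' \<in> C" and "vbl c' = vbl cs" and "c' \<noteq> cs"
  shows "prob_forbidden V C cs \<ge> (1 - exp (1 / real k) / 2) ^ k"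
proof -
  have "is_clause c'"
    using assms(1,6) by (simp add: kds_CNF_def)
  then obtain v1 where v1: "v1 \<in> vbl cs" "forbidden c' v1 \<noteq> forbidden cs v1"
    using ex_forbidden_neq[OF _ assms(3,7,8)] assms(7) by metis
  have "1 \<le> d"
    using kds_CNF_degree_pos[OF assms(1,6)] v1(1) assms(7) by simp
  moreover have "1 \<le> k"
    using card_vbl_pos[OF assms(3) v1(1)] assms(4) by simp
  ultimately have "4 * d * k \<le> 2 ^ (k - s)"
    using assms(2) by (intro four_mult_le_two_power_if_log_bound) auto
  then interpret twin_clause k d s V C cs c' v1
    using assms(1,3,4,6,7) v1 by unfold_locales auto
  show ?thesis
    by (rule prob_forbidden_ge)
qed

end
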